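(* (1) $\mathbb{S}_1^*=K^*(1+F)^*\simeq K^*\times\mathrm{GL}_\infty(K)$. (2) $Z(\mathbb{S}_1^* )=K^*$ and $Z((1+F)^* )=\{1\}$. (3) $\mathrm{Inn}(\mathbb{S}_1)\simeq\mathrm{GL}_\infty(K)$ via $\omega_u\leftrightarrow u$ for $u\in(1+F)^*$.
   Context: $K$ is a field of characteristic zero. $\mathbb{S}_1=K\langle x,y\mid yx=1\rangle$; $\mathbb{S}_1^*$ is its group of units and $Z(G)$ denotes the centre of a group $G$. For $i,j\in\mathbb{N}$, $E_{ij}:=x^iy^j-x^{i+1}y^{j+1}$, and $F=\bigoplus_{i,j}KE_{ij}$, an ideal isomorphic to the algebra $M_\infty(K)=\bigcup_{d\ge1}M_d(K)$ of $\mathbb{N}\times\mathbb{N}$ matrices with finitely many nonzero entries. $(1+F)^*$ is the group of units of the monoid $1+F$, and $\mathrm{GL}_\infty(K)$ is the group of units of $1+M_\infty(K)$. $\mathrm{Inn}(\mathbb{S}_1)=\{\omega_u:a\mapsto uau^{-1}\mid u\in\mathbb{S}_1^*\}$. *)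

theory Defs
  imports "HOL-Algebra.Group" "HOL-Algebra.Coset" "HOL-Library.FuncSet"
begin

text \<open>S_1 has the K-basis of monomials x^i y^j (i, j natural numbers).
An element of S_1 is represented by its finitely supported coefficient
function c :: nat \<times> nat \<Rightarrow> K, where c (i,j) is the coefficient of x^i y^j.
Since y^j x^k = x^(k-j) if j \<le> k and y^(j-k) otherwise, the product
of monomials is x^i y^j * x^k y^l = x^(i+k-j) y^l (j \<le> k) resp.
x^i y^(j-k+l) (k < j).\<close>

definition mon_mult :: "nat \<times> nat \<Rightarrow> nat \<times> nat \<Rightarrow> nat \<times> nat" where
  "mon_mult p q = (case p of (i, j) \<Rightarrow> case q of (k, l) \<Rightarrow>
     if j \<le> k then (i + k - j, l) else (i, j - k + l))"

definition supp2 :: "(nat \<times> nat \<Rightarrow> 'a::zero) \<Rightarrow> (nat \<times> nat) set" where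
  "supp2 f = {p. f p \<noteq> 0}"

definition s1_mult :: "(nat \<times> nat \<Rightarrow> 'a::field) \<Rightarrow> (nat \<times> nat \<Rightarrow> 'a) \<Rightarrow> (nat \<times> nat \<Rightarrow> 'a)" where
  "s1_mult f g = (\<lambda>m. \<Sum>(p, q) \<in> {(p, q). p \<in> supp2 f \<and> q \<in> supp2 g \<and> mon_mult p q = m}. f p * g q)"

definition monom_xy :: "nat \<Rightarrow> nat \<Rightarrow> (nat \<times> nat \<Rightarrow> 'a::field)" where
  "monom_xy i j = (\<lambda>p. if p = (i, j) then 1 else 0)"

definition scal :: "'a::field \<Rightarrow> (nat \<times> nat \<Rightarrow> 'a)" where
  "scal c = (\<lambda>p. if p = (0, 0) then c else 0)"

definition S1 :: "(nat \<times> nat \<Rightarrow> 'a::field) monoid" where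
  "S1 = \<lparr>carrier = {f. finite (supp2 f)}, mult = s1_mult, one = monom_xy 0 0\<rparr>"

definition Kstar_in_S1 :: "(nat \<times> nat \<Rightarrow> 'a::field) set" where
  "Kstar_in_S1 = {scal c | c. c \<noteq> 0}"

definition Emat :: "nat \<Rightarrow> nat \<Rightarrow> (nat \<times> nat \<Rightarrow> 'a::field)" where
  "Emat i j = (\<lambda>p. monom_xy i j p - monom_xy (Suc i) (Suc j) p)"

definition Fideal :: "(nat \<times> nat \<Rightarrow> 'a::field) set" where
  "Fideal = {(\<lambda>p. \<Sum>q\<in>A. c q * Emat (fst q) (snd q) p) | A c. finite A}"

definition onePlusF :: "(nat \<times> nat \<Rightarrow> 'a::field) monoid" where
  "onePlusF = S1\<lparr>carrier := {(\<lambda>p. monom_xy 0 0 p + f p) | f. f \<in> Fideal}\<rparr>"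

text \<open>In such a matrix
every row has only finitely many nonzero entries, so the product below
(sum over the nonzero entries of row i of A) is the usual matrix product.\<close>

definition idmat :: "nat \<times> nat \<Rightarrow> 'a::field" where
  "idmat = (\<lambda>(i, j). if i = j then 1 else 0)"

definition matmult :: "(nat \<times> nat \<Rightarrow> 'a::field) \<Rightarrow> (nat \<times> nat \<Rightarrow> 'a) \<Rightarrow> (nat \<times> nat \<Rightarrow> 'a)" where
  "matmult A B = (\<lambda>(i, k). \<Sum>j \<in> {j. A (i, j) \<noteq> 0}. A (i, j) * B (j, k))"

definition onePlusMinf :: "(nat \<times> nat \<Rightarrow> 'a::field) monoid" where
  "onePlusMinf = \<lparr>carrier = {A. finite {p. A p \<noteq> idmat p}}, mult = matmult, one = idmat\<rparr>"

definition GL_inf :: "(nat \<times> nat \<Rightarrow> 'a::field) monoid" where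
  "GL_inf = units_of onePlusMinf"

definition Kmult :: "'a::field monoid" where
  "Kmult = \<lparr>carrier = {c. c \<noteq> 0}, mult = (*), one = 1\<rparr>"

definition group_center :: "('a, 'b) monoid_scheme \<Rightarrow> 'a set" where
  "group_center G = {z \<in> carrier G. \<forall>g \<in> carrier G. z \<otimes>\<^bsub>G\<^esub> g = g \<otimes>\<^bsub>G\<^esub> z}"

definition omega :: "(nat \<times> nat \<Rightarrow> 'a::field) \<Rightarrow> ((nat \<times> nat \<Rightarrow> 'a) \<Rightarrow> (nat \<times> nat \<Rightarrow> 'a))" where
  "omega u = (\<lambda>a \<in> carrier S1. u \<otimes>\<^bsub>S1\<^esub> a \<otimes>\<^bsub>S1\<^esub> inv\<^bsub>S1\<^esub> u)"

definition Inn_S1 :: "((nat \<times> nat \<Rightarrow> 'a::field) \<Rightarrow> (nat \<times> nat \<Rightarrow> 'a)) monoid" where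
  "Inn_S1 = \<lparr>carrier = omega ` Units S1,
             mult = (\<lambda>f g. \<lambda>a \<in> carrier S1. f (g a)),
             one = (\<lambda>a \<in> carrier S1. a)\<rparr>"

end

theory Submission
  imports Defs
begin

text \<open>Letting \<open>S\<^sub>1\<close> act on \<open>K[x] = S\<^sub>1 / S\<^sub>1 y\<close> gives a faithful representation by
  row-finite \<open>\<nat> \<times> \<nat>\<close> matrices that sends \<open>E\<^sub>i\<^sub>j\<close> to the matrix unit; hence \<open>1 + F \<cong> 1 + M\<^sub>\<infinity>(K)\<close>
  and \<open>(1 + F)\<^sup>* \<cong> GL\<^sub>\<infinity>(K)\<close>.  Modulo \<open>F\<close>, \<open>S\<^sub>1\<close> maps onto \<open>K[x, x\<^sup>-\<^sup>1]\<close>, whose units are the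
  monomials \<open>c x\<^sup>k\<close>; far down the diagonal the matrix of a unit \<open>u\<close> is the Toeplitz matrix of
  \<open>c x\<^sup>k\<close>, and comparing traces of the leading corners of \<open>u u\<^sup>-\<^sup>1 = 1\<close> and \<open>u\<^sup>-\<^sup>1 u = 1\<close> shows
  that \<open>k = 0\<close> in characteristic zero, i.e. \<open>c\<^sup>-\<^sup>1 u \<in> 1 + F\<close>.  An element commuting with all
  transvections \<open>1 + E\<^sub>i\<^sub>j\<close> is a scalar; this gives both centres, and shows that \<open>\<omega>\<^sub>u = \<omega>\<^sub>v\<close>
  forces \<open>u \<in> K\<^sup>* v\<close>, so \<open>\<omega>\<close> is injective on \<open>(1 + F)\<^sup>*\<close>, where the only scalar is \<open>1\<close>.\<close>

lemma carrier_S1: "carrier S1 = {f. finite (supp2 f)}"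
  by (simp add: S1_def)

lemma mult_S1 [simp]: "mult S1 = s1_mult"
  by (simp add: S1_def)

lemma one_S1 [simp]: "one S1 = monom_xy 0 0"
  by (simp add: S1_def)

lemma mon_mult_assoc: "mon_mult (mon_mult p q) r = mon_mult p (mon_mult q r)"
  by (cases p; cases q; cases r) (auto simp: mon_mult_def)

lemma mon_mult_0_left [simp]: "mon_mult (0, 0) q = q"
  by (cases q) (auto simp: mon_mult_def)

lemma mon_mult_0_right [simp]: "mon_mult p (0, 0) = p"
  by (cases p) (auto simp: mon_mult_def)

lemma s1_mult_eq_sum:
  fixes f g :: "nat \<times> nat \<Rightarrow> 'a::field"
  assumes "finite A" "finite B" "supp2 f \<subseteq> A" "supp2 g \<subseteq> B"
  shows "s1_mult f g m = (\<Sum>p\<in>A. \<Sum>q\<in>B. if mon_mult p q = m then f p * g q else 0)"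
proof -
  have "s1_mult f g m = (\<Sum>(p, q)\<in>A \<times> B. if mon_mult p q = m then f p * g q else 0)"
    unfolding s1_mult_def
    by (rule sum.mono_neutral_cong_left) (use assms in \<open>auto simp: supp2_def split: if_splits\<close>)
  then show ?thesis
    by (simp add: sum.cartesian_product)
qed

lemma supp2_s1_mult_subset:
  "supp2 (s1_mult f g) \<subseteq> (\<lambda>(p, q). mon_mult p q) ` (supp2 f \<times> supp2 g)"
proof
  fix m assume "m \<in> supp2 (s1_mult f g)"
  then have "(\<Sum>(p, q) \<in> {(p, q). p \<in> supp2 f \<and> q \<in> supp2 g \<and> mon_mult p q = m}. f p * g q) \<noteq> 0"
    by (simp add: supp2_def s1_mult_def)
  then have "{(p, q). p \<in> supp2 f \<and> q \<in> supp2 g \<and> mon_mult p q = m} \<noteq> {}"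
    by (intro notI) simp
  then show "m \<in> (\<lambda>(p, q). mon_mult p q) ` (supp2 f \<times> supp2 g)"
    by force
qed

lemma finite_supp2_s1_mult [intro]:
  "finite (supp2 f) \<Longrightarrow> finite (supp2 g) \<Longrightarrow> finite (supp2 (s1_mult f g))"
  by (rule finite_subset[OF supp2_s1_mult_subset]) auto

lemma sum_fibres_collapse:
  fixes X :: "'b \<Rightarrow> 'c \<Rightarrow> 'a::semiring_0"
  assumes "finite A" "finite B" "finite C" "\<And>p q. p \<in> A \<Longrightarrow> q \<in> B \<Longrightarrow> \<phi> p q \<in> C"
  shows "(\<Sum>s\<in>C. G s * (\<Sum>p\<in>A. \<Sum>q\<in>B. if \<phi> p q = s then X p q else 0))
       = (\<Sum>p\<in>A. \<Sum>q\<in>B. G (\<phi> p q) * X p q)"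
proof -
  have "(\<Sum>s\<in>C. G s * (\<Sum>p\<in>A. \<Sum>q\<in>B. if \<phi> p q = s then X p q else 0))
      = (\<Sum>s\<in>C. \<Sum>p\<in>A. \<Sum>q\<in>B. if \<phi> p q = s then G s * X p q else 0)"
    unfolding sum_distrib_left by (intro sum.cong refl) simp
  also have "\<dots> = (\<Sum>p\<in>A. \<Sum>q\<in>B. \<Sum>s\<in>C. if \<phi> p q = s then G s * X p q else 0)"
    by (subst sum.swap) (intro sum.cong refl sum.swap)
  also have "\<dots> = (\<Sum>p\<in>A. \<Sum>q\<in>B. G (\<phi> p q) * X p q)"
    using assms by (simp)
  finally show ?thesis .
qed

lemma s1_mult_assoc_left_sum:
  fixes f g h :: "nat \<times> nat \<Rightarrow> 'a::field"
  assumes f: "finite (supp2 f)" and g: "finite (supp2 g)" and h: "finite (supp2 h)"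
  shows "s1_mult (s1_mult f g) h m = (\<Sum>p\<in>supp2 f. \<Sum>q\<in>supp2 g. \<Sum>r\<in>supp2 h.
           if mon_mult (mon_mult p q) r = m then f p * g q * h r else 0)"
proof -
  let ?C = "(\<lambda>(p, q). mon_mult p q) ` (supp2 f \<times> supp2 g)"
  let ?H = "\<lambda>s. \<Sum>r\<in>supp2 h. if mon_mult s r = m then h r else 0"
  have "s1_mult (s1_mult f g) h m
      = (\<Sum>s\<in>?C. \<Sum>r\<in>supp2 h. if mon_mult s r = m then s1_mult f g s * h r else 0)"
    by (rule s1_mult_eq_sum) (use f g h supp2_s1_mult_subset in auto)
  also have "\<dots> = (\<Sum>s\<in>?C. ?H s *
      (\<Sum>p\<in>supp2 f. \<Sum>q\<in>supp2 g. if mon_mult p q = s then f p * g q else 0))"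
    unfolding sum_distrib_right by (intro sum.cong refl) (simp add: s1_mult_eq_sum[OF f g])
  also have "\<dots> = (\<Sum>p\<in>supp2 f. \<Sum>q\<in>supp2 g. ?H (mon_mult p q) * (f p * g q))"
    by (rule sum_fibres_collapse) (use f g in auto)
  also have "\<dots> = (\<Sum>p\<in>supp2 f. \<Sum>q\<in>supp2 g. \<Sum>r\<in>supp2 h.
           if mon_mult (mon_mult p q) r = m then f p * g q * h r else 0)"
    unfolding sum_distrib_left sum_distrib_right by (intro sum.cong refl) (simp add: mult_ac)
  finally show ?thesis .
qed

lemma s1_mult_assoc_right_sum:
  fixes f g h :: "nat \<times> nat \<Rightarrow> 'a::field"
  assumes f: "finite (supp2 f)" and g: "finite (supp2 g)" and h: "finite (supp2 h)"
  shows "s1_mult f (s1_mult g h) m = (\<Sum>p\<in>supp2 f. \<Sum>q\<in>supp2 g. \<Sum>r\<in>supp2 h.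
           if mon_mult p (mon_mult q r) = m then f p * g q * h r else 0)"
proof -
  let ?C = "(\<lambda>(q, r). mon_mult q r) ` (supp2 g \<times> supp2 h)"
  let ?\<delta> = "\<lambda>p s. if mon_mult p s = m then 1 else 0"
  have "s1_mult f (s1_mult g h) m
      = (\<Sum>p\<in>supp2 f. \<Sum>s\<in>?C. if mon_mult p s = m then f p * s1_mult g h s else 0)"
    by (rule s1_mult_eq_sum) (use f g h supp2_s1_mult_subset in auto)
  also have "\<dots> = (\<Sum>p\<in>supp2 f. f p * (\<Sum>s\<in>?C. ?\<delta> p s * s1_mult g h s))"
    unfolding sum_distrib_left by (intro sum.cong refl) simp
  also have "\<dots> = (\<Sum>p\<in>supp2 f. f p * (\<Sum>s\<in>?C. ?\<delta> p s *
      (\<Sum>q\<in>supp2 g. \<Sum>r\<in>supp2 h. if mon_mult q r = s then g q * h r else 0)))"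
    by (simp only: s1_mult_eq_sum[OF g h subset_refl subset_refl])
  also have "\<dots> = (\<Sum>p\<in>supp2 f. f p *
      (\<Sum>q\<in>supp2 g. \<Sum>r\<in>supp2 h. ?\<delta> p (mon_mult q r) * (g q * h r)))"
    by (intro sum.cong refl arg_cong2[where f = "(*)"] sum_fibres_collapse) (use g h in auto)
  also have "\<dots> = (\<Sum>p\<in>supp2 f. \<Sum>q\<in>supp2 g. \<Sum>r\<in>supp2 h.
           if mon_mult p (mon_mult q r) = m then f p * g q * h r else 0)"
    unfolding sum_distrib_left by (intro sum.cong refl) (simp add: mult_ac)
  finally show ?thesis .
qed

lemma s1_mult_assoc:
  fixes f g h :: "nat \<times> nat \<Rightarrow> 'a::field"
  assumes "finite (supp2 f)" "finite (supp2 g)" "finite (supp2 h)"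
  shows "s1_mult (s1_mult f g) h = s1_mult f (s1_mult g h)"
  by (rule ext) (simp add: s1_mult_assoc_left_sum s1_mult_assoc_right_sum assms mon_mult_assoc)

lemma scal_apply: "scal c p = (if p = (0, 0) then c else 0)"
  by (simp add: scal_def)

lemma finite_supp2_scal [simp]: "finite (supp2 (scal c))"
  by (rule finite_subset[of _ "{(0, 0)}"]) (auto simp: supp2_def scal_def split: if_splits)

lemma s1_mult_scal_left:
  fixes x :: "nat \<times> nat \<Rightarrow> 'a::field"
  assumes "finite (supp2 x)"
  shows "s1_mult (scal c) x = (\<lambda>p. c * x p)"
proof
  fix m
  have "s1_mult (scal c) x m
      = (\<Sum>p\<in>{(0, 0)}. \<Sum>q\<in>supp2 x. if mon_mult p q = m then scal c p * x q else 0)"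
    by (rule s1_mult_eq_sum) (use assms in \<open>auto simp: supp2_def scal_def split: if_splits\<close>)
  also have "\<dots> = (\<Sum>q\<in>supp2 x. if q = m then c * x q else 0)"
    by (simp add: scal_apply cong: if_cong)
  also have "\<dots> = c * x m"
    using assms by (simp add: supp2_def)
  finally show "s1_mult (scal c) x m = c * x m" .
qed

lemma s1_mult_scal_right:
  fixes x :: "nat \<times> nat \<Rightarrow> 'a::field"
  assumes "finite (supp2 x)"
  shows "s1_mult x (scal c) = (\<lambda>p. c * x p)"
proof
  fix m
  have "s1_mult x (scal c) m
      = (\<Sum>q\<in>supp2 x. \<Sum>p\<in>{(0, 0)}. if mon_mult q p = m then x q * scal c p else 0)"
    by (rule s1_mult_eq_sum) (use assms in \<open>auto simp: supp2_def scal_def split: if_splits\<close>)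
  also have "\<dots> = (\<Sum>q\<in>supp2 x. if q = m then c * x q else 0)"
    by (auto simp: scal_apply mult.commute intro!: sum.cong)
  also have "\<dots> = c * x m"
    using assms by (simp add: supp2_def)
  finally show "s1_mult x (scal c) m = c * x m" .
qed

lemma monom_xy_0_0: "monom_xy 0 0 = scal 1"
  by (auto simp: monom_xy_def scal_def)

lemma finite_supp2_one [simp]: "finite (supp2 (monom_xy 0 0))"
  by (simp add: monom_xy_0_0)

lemma s1_mult_one_left [simp]: "finite (supp2 x) \<Longrightarrow> s1_mult (monom_xy 0 0) x = x"
  by (simp add: monom_xy_0_0 s1_mult_scal_left)

lemma s1_mult_one_right [simp]: "finite (supp2 x) \<Longrightarrow> s1_mult x (monom_xy 0 0) = x"
  by (simp add: monom_xy_0_0 s1_mult_scal_right)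

lemma s1_mult_smult:
  fixes f g :: "nat \<times> nat \<Rightarrow> 'a::field"
  assumes "finite (supp2 f)" "finite (supp2 g)"
  shows "s1_mult (\<lambda>p. a * f p) (\<lambda>p. b * g p) = (\<lambda>m. (a * b) * s1_mult f g m)"
proof
  fix m
  have "s1_mult (\<lambda>p. a * f p) (\<lambda>p. b * g p) m
     = (\<Sum>p\<in>supp2 f. \<Sum>q\<in>supp2 g. if mon_mult p q = m then (a * f p) * (b * g q) else 0)"
    by (rule s1_mult_eq_sum) (use assms in \<open>auto simp: supp2_def\<close>)
  also have "\<dots> = (a * b) * s1_mult f g m"
    unfolding s1_mult_eq_sum[OF assms order.refl order.refl] sum_distrib_left
    by (intro sum.cong refl) (auto simp: mult_ac)
  finally show "s1_mult (\<lambda>p. a * f p) (\<lambda>p. b * g p) m = (a * b) * s1_mult f g m" .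
qed

lemma monoid_S1: "monoid (S1 :: (nat \<times> nat \<Rightarrow> 'a::field) monoid)"
  by (rule monoidI) (auto simp: carrier_S1 s1_mult_assoc)

interpretation S1: monoid "S1 :: (nat \<times> nat \<Rightarrow> 'a::field) monoid"
  by (rule monoid_S1)

lemma scal_in_Units_S1: "c \<noteq> 0 \<Longrightarrow> scal c \<in> Units (S1 :: (nat \<times> nat \<Rightarrow> 'a::field) monoid)"
  unfolding Units_def
  by (auto simp: carrier_S1 s1_mult_scal_left monom_xy_0_0 scal_apply intro!: exI[of _ "scal (inverse c)"])

section \<open>The faithful representation on K[x]\<close>

definition mon_rep :: "nat \<times> nat \<Rightarrow> nat \<times> nat \<Rightarrow> 'a::field" where
  "mon_rep p q = (case p of (i, j) \<Rightarrow> case q of (a, b) \<Rightarrow> if i \<le> a \<and> b = a - i + j then 1 else 0)"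

text \<open>\<open>rep f (a, b)\<close> is the coefficient of \<open>x\<^sup>a\<close> in \<open>f x\<^sup>b\<close>, computed in the left
  module \<open>K[x] = S\<^sub>1 / S\<^sub>1 y\<close> on which \<open>y\<close> acts by \<open>x\<^sup>n \<mapsto> x\<^sup>n\<^sup>-\<^sup>1\<close> and \<open>1 \<mapsto> 0\<close>.\<close>

definition rep :: "(nat \<times> nat \<Rightarrow> 'a::field) \<Rightarrow> (nat \<times> nat \<Rightarrow> 'a)" where
  "rep f = (\<lambda>(a, b). \<Sum>p\<in>supp2 f. f p * mon_rep p (a, b))"

lemma mon_rep_apply [simp]:
  "mon_rep (i, j) (a, b) = (if i \<le> a \<and> b = a - i + j then 1 else 0)"
  by (simp add: mon_rep_def)

lemma rep_eq_sum:
  "finite A \<Longrightarrow> supp2 f \<subseteq> A \<Longrightarrow> rep f (a, b) = (\<Sum>p\<in>A. f p * mon_rep p (a, b))"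
  unfolding rep_def by (auto intro!: sum.mono_neutral_left simp: supp2_def)

lemma matmult_eq_sum:
  "finite S \<Longrightarrow> (\<And>j. A (i, j) \<noteq> 0 \<Longrightarrow> j \<in> S) \<Longrightarrow> matmult A B (i, k) = (\<Sum>j\<in>S. A (i, j) * B (j, k))"
  unfolding matmult_def by (auto intro!: sum.mono_neutral_left)

lemma idmat_apply: "idmat (a, b) = (if a = b then 1 else 0)"
  by (simp add: idmat_def)

lemma sum_idmat_left:
  assumes "finite S"
  shows "(\<Sum>j\<in>S. idmat (a, j) * X j) = (if a \<in> S then X a else 0)"
proof -
  have "(\<Sum>j\<in>S. idmat (a, j) * X j) = (\<Sum>j\<in>S. if a = j then X j else 0)"
    by (rule sum.cong) (simp_all add: idmat_apply)
  with assms show ?thesis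
    by simp
qed

lemma sum_idmat_right:
  assumes "finite S"
  shows "(\<Sum>j\<in>S. X j * idmat (j, c)) = (if c \<in> S then X c else 0)"
proof -
  have "(\<Sum>j\<in>S. X j * idmat (j, c)) = (\<Sum>j\<in>S. if c = j then X j else 0)"
    by (rule sum.cong) (simp_all add: idmat_apply)
  with assms show ?thesis
    by simp
qed

lemma sum_mon_rep_mult:
  assumes "finite S" "a - i + j \<in> S"
  shows "(\<Sum>b\<in>S. mon_rep (i, j) (a, b) * mon_rep q (b, c)) = (mon_rep (mon_mult (i, j) q) (a, c) :: 'a::field)"
proof -
  obtain k l where q: "q = (k, l)" by fastforce
  have "(\<Sum>b\<in>S. mon_rep (i, j) (a, b) * mon_rep q (b, c))
      = (\<Sum>b\<in>S. if b = a - i + j then (if i \<le> a then (mon_rep q (b, c) :: 'a) else 0) else 0)"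
    by (intro sum.cong refl) auto
  also have "\<dots> = (if i \<le> a then mon_rep q (a - i + j, c) else 0)"
    using assms by (simp)
  also have "\<dots> = mon_rep (mon_mult (i, j) q) (a, c)"
    unfolding q by (cases "j \<le> k") (auto simp: mon_mult_def)
  finally show ?thesis .
qed

lemma rep_row_support:
  assumes "finite (supp2 f)" "rep f (a, b) \<noteq> 0"
  shows "b \<le> a + (\<Sum>p\<in>supp2 f. snd p)"
proof -
  from assms obtain p where p: "p \<in> supp2 f" "mon_rep p (a, b) \<noteq> (0::'a)"
    unfolding rep_def by (auto elim: sum.not_neutral_contains_not_neutral)
  have "snd p \<le> (\<Sum>p\<in>supp2 f. snd p)"
    by (rule member_le_sum) (use assms p in auto)
  with p(2) show ?thesis
    by (cases p) (auto split: if_splits)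
qed

lemma rep_mult:
  fixes f g :: "nat \<times> nat \<Rightarrow> 'a::field"
  assumes f: "finite (supp2 f)" and g: "finite (supp2 g)"
  shows "rep (s1_mult f g) = matmult (rep f) (rep g)"
proof (rule ext, clarify)
  fix a c
  let ?C = "(\<lambda>(p, q). mon_mult p q) ` (supp2 f \<times> supp2 g)"
  let ?S = "{..a + (\<Sum>p\<in>supp2 f. snd p)}"
  have "rep (s1_mult f g) (a, c) = (\<Sum>s\<in>?C. mon_rep s (a, c) *
      (\<Sum>p\<in>supp2 f. \<Sum>q\<in>supp2 g. if mon_mult p q = s then f p * g q else 0))"
    using f g by (subst rep_eq_sum[OF _ supp2_s1_mult_subset])
      (auto intro!: sum.cong simp: s1_mult_eq_sum[OF f g] mult.commute)
  also have "\<dots> = (\<Sum>p\<in>supp2 f. \<Sum>q\<in>supp2 g. mon_rep (mon_mult p q) (a, c) * (f p * g q))"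
    by (rule sum_fibres_collapse) (use f g in auto)
  also have "\<dots> = (\<Sum>p\<in>supp2 f. \<Sum>q\<in>supp2 g. \<Sum>b\<in>?S. (f p * mon_rep p (a, b)) * (g q * mon_rep q (b, c)))"
  proof (intro sum.cong refl)
    fix p q assume p: "p \<in> supp2 f"
    obtain i j where pij: "p = (i, j)" by fastforce
    have "j \<le> (\<Sum>p\<in>supp2 f. snd p)"
      using member_le_sum[of p "supp2 f" snd] f p pij by auto
    then have "mon_rep (mon_mult p q) (a, c) = (\<Sum>b\<in>?S. mon_rep p (a, b) * mon_rep q (b, c) :: 'a)"
      unfolding pij by (intro sum_mon_rep_mult[symmetric]) auto
    then show "mon_rep (mon_mult p q) (a, c) * (f p * g q)
        = (\<Sum>b\<in>?S. (f p * mon_rep p (a, b)) * (g q * mon_rep q (b, c)))"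
      by (simp add: sum_distrib_left mult_ac)
  qed
  also have "\<dots> = (\<Sum>b\<in>?S. rep f (a, b) * rep g (b, c))"
    by (simp add: rep_eq_sum[OF f] rep_eq_sum[OF g] sum_product sum.swap[of _ ?S])
  also have "\<dots> = matmult (rep f) (rep g) (a, c)"
    by (rule matmult_eq_sum[symmetric]) (use rep_row_support[OF f] in auto)
  finally show "rep (s1_mult f g) (a, c) = matmult (rep f) (rep g) (a, c)" .
qed

lemma rep_Suc_Suc:
  assumes "finite (supp2 f)"
  shows "rep f (Suc a, Suc b) = rep f (a, b) + f (Suc a, Suc b)"
proof -
  have "f p * mon_rep p (Suc a, Suc b) = f p * mon_rep p (a, b) + (if p = (Suc a, Suc b) then f p else 0)" for p
    by (cases p) auto
  then have "rep f (Suc a, Suc b) = rep f (a, b) + (\<Sum>p\<in>supp2 f. if p = (Suc a, Suc b) then f p else 0)"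
    unfolding rep_def split_conv sum.distrib[symmetric] by simp
  then show ?thesis
    using assms by (simp add: supp2_def)
qed

lemma rep_0_left:
  assumes "finite (supp2 f)"
  shows "rep f (0, b) = f (0, b)"
proof -
  have "f p * mon_rep p (0, b) = (if p = (0, b) then f p else 0)" for p
    by (cases p) auto
  with assms show ?thesis
    by (simp add: rep_def supp2_def)
qed

lemma rep_0_right:
  assumes "finite (supp2 f)"
  shows "rep f (a, 0) = f (a, 0)"
proof -
  have "f p * mon_rep p (a, 0) = (if p = (a, 0) then f p else 0)" for p
    by (cases p) auto
  with assms show ?thesis
    by (simp add: rep_def supp2_def)
qed

lemma rep_inj:
  assumes "finite (supp2 f)" "finite (supp2 g)" "rep f = rep g"
  shows "f = g"
proof (rule ext, clarify)
  fix a b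
  show "f (a, b) = g (a, b)"
  proof (cases a b rule: nat.exhaust[case_product nat.exhaust])
    case (Suc_Suc a' b')
    then show ?thesis
      using rep_Suc_Suc[OF assms(1), of a' b'] rep_Suc_Suc[OF assms(2), of a' b'] assms(3) by simp
  qed (use rep_0_left rep_0_right assms in metis)+
qed

lemma rep_add:
  fixes f g :: "nat \<times> nat \<Rightarrow> 'a::field"
  assumes "finite (supp2 f)" "finite (supp2 g)"
  shows "rep (\<lambda>p. f p + g p) = (\<lambda>q. rep f q + rep g q)"
proof (rule ext, clarify)
  fix a b
  let ?A = "supp2 f \<union> supp2 g"
  have "rep (\<lambda>p. f p + g p) (a, b) = (\<Sum>p\<in>?A. (f p + g p) * mon_rep p (a, b))"
    by (rule rep_eq_sum) (use assms in \<open>auto simp: supp2_def\<close>)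
  also have "\<dots> = rep f (a, b) + rep g (a, b)"
    using assms by (simp add: rep_eq_sum[of ?A] distrib_right sum.distrib)
  finally show "rep (\<lambda>p. f p + g p) (a, b) = rep f (a, b) + rep g (a, b)" .
qed

lemma rep_smult:
  fixes f :: "nat \<times> nat \<Rightarrow> 'a::field"
  assumes "finite (supp2 f)"
  shows "rep (\<lambda>p. c * f p) = (\<lambda>q. c * rep f q)"
proof (rule ext, clarify)
  fix a b
  have "rep (\<lambda>p. c * f p) (a, b) = (\<Sum>p\<in>supp2 f. (c * f p) * mon_rep p (a, b))"
    by (rule rep_eq_sum) (use assms in \<open>auto simp: supp2_def\<close>)
  then show "rep (\<lambda>p. c * f p) (a, b) = c * rep f (a, b)"
    by (simp add: rep_def sum_distrib_left mult.assoc)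
qed

lemma rep_scal: "rep (scal c) = (\<lambda>q. c * idmat q)"
proof (rule ext, clarify)
  fix a b
  have "rep (scal c) (a, b) = (\<Sum>p\<in>{(0, 0)}. scal c p * mon_rep p (a, b))"
    by (rule rep_eq_sum) (auto simp: supp2_def scal_apply split: if_splits)
  then show "rep (scal c) (a, b) = c * idmat (a, b)"
    by (simp add: scal_apply idmat_apply)
qed

lemma rep_one: "rep (monom_xy 0 0) = idmat"
  by (simp add: monom_xy_0_0 rep_scal)

lemma supp2_Emat: "supp2 (Emat i j) \<subseteq> {(i, j), (Suc i, Suc j)}"
  by (auto simp: supp2_def Emat_def monom_xy_def split: if_splits)

lemma finite_supp2_Emat [simp]: "finite (supp2 (Emat i j))"
  by (rule finite_subset[OF supp2_Emat]) auto

lemma rep_Emat: "rep (Emat i j) = (\<lambda>q. if q = (i, j) then 1 else (0::'a::field))"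
proof (rule ext, clarify)
  fix a b
  have "rep (Emat i j) (a, b) = (\<Sum>p\<in>{(i, j), (Suc i, Suc j)}. Emat i j p * (mon_rep p (a, b) :: 'a))"
    by (rule rep_eq_sum[OF _ supp2_Emat]) auto
  also have "\<dots> = mon_rep (i, j) (a, b) - mon_rep (Suc i, Suc j) (a, b)"
    by (simp add: Emat_def monom_xy_def)
  also have "\<dots> = (if (a, b) = (i, j) then 1 else 0)"
    by (cases "Suc i \<le> a") (auto simp: Suc_diff_Suc)
  finally show "rep (Emat i j) (a, b) = (if (a, b) = (i, j) then 1 else (0::'a))" .
qed

lemma supp2_add_subset: "supp2 (\<lambda>p. f p + g p) \<subseteq> supp2 f \<union> supp2 (g :: _ \<Rightarrow> 'a::monoid_add)"
  by (auto simp: supp2_def)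

lemma finite_supp2_add [intro]:
  "finite (supp2 f) \<Longrightarrow> finite (supp2 g) \<Longrightarrow> finite (supp2 (\<lambda>p. f p + g p :: 'a::monoid_add))"
  by (rule finite_subset[OF supp2_add_subset]) auto

lemma finite_supp2_smult [intro]: "finite (supp2 f) \<Longrightarrow> finite (supp2 (\<lambda>p. c * f p :: 'a::field))"
  by (rule finite_subset[of _ "supp2 f"]) (auto simp: supp2_def)

definition Esum :: "(nat \<times> nat) set \<Rightarrow> (nat \<times> nat \<Rightarrow> 'a) \<Rightarrow> (nat \<times> nat \<Rightarrow> 'a::field)" where
  "Esum A c = (\<lambda>p. \<Sum>q\<in>A. c q * Emat (fst q) (snd q) p)"

lemma Fideal_eq: "Fideal = {Esum A c | A c. finite A}"
  by (simp add: Fideal_def Esum_def)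

lemma Esum_insert:
  "finite A \<Longrightarrow> x \<notin> A \<Longrightarrow> Esum (insert x A) c = (\<lambda>p. c x * Emat (fst x) (snd x) p + Esum A c p)"
  by (simp add: Esum_def)

lemma finite_supp2_Esum: "finite A \<Longrightarrow> finite (supp2 (Esum A c))"
proof (induction A rule: finite_induct)
  case empty
  then show ?case by (simp add: Esum_def supp2_def)
next
  case (insert x A)
  then show ?case
    unfolding Esum_insert[OF insert(1,2)] by (intro finite_supp2_add finite_supp2_smult) simp_all
qed

lemma rep_Esum: "finite A \<Longrightarrow> rep (Esum A c) = (\<lambda>q. if q \<in> A then c q else 0)"
proof (induction A rule: finite_induct)
  case empty
  then show ?case by (simp add: Esum_def rep_def supp2_def)
next
  case (insert x A)
  have "finite (supp2 (\<lambda>p. c x * Emat (fst x) (snd x) p))"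
    by (intro finite_supp2_smult) simp
  with insert show ?case
    by (auto simp: Esum_insert rep_add finite_supp2_Esum rep_smult rep_Emat)
qed

section \<open>The monoid 1 + F and its units\<close>

lemma carrier_onePlusF: "carrier onePlusF = {(\<lambda>p. monom_xy 0 0 p + f p) | f. f \<in> Fideal}"
  by (simp add: onePlusF_def)

lemma mult_onePlusF [simp]: "mult onePlusF = s1_mult"
  by (simp add: onePlusF_def S1_def)

lemma one_onePlusF [simp]: "one onePlusF = monom_xy 0 0"
  by (simp add: onePlusF_def S1_def)

lemma carrier_onePlusMinf: "carrier onePlusMinf = {A. finite {p. A p \<noteq> idmat p}}"
  by (simp add: onePlusMinf_def)

lemma mult_onePlusMinf [simp]: "mult onePlusMinf = matmult"
  by (simp add: onePlusMinf_def)

lemma one_onePlusMinf [simp]: "one onePlusMinf = idmat"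
  by (simp add: onePlusMinf_def)

lemma rep_one_plus_Esum:
  assumes "finite A"
  shows "finite (supp2 (\<lambda>p. monom_xy 0 0 p + Esum A c p))"
    and "rep (\<lambda>p. monom_xy 0 0 p + Esum A c p) = (\<lambda>q. idmat q + (if q \<in> A then c q else 0))"
  using assms by (auto simp: finite_supp2_Esum rep_add rep_one rep_Esum)

lemma onePlusF_D:
  assumes "h \<in> carrier onePlusF"
  shows "finite (supp2 h)" "rep h \<in> carrier onePlusMinf"
proof -
  from assms obtain A c where "finite A" and h: "h = (\<lambda>p. monom_xy 0 0 p + Esum A c p)"
    unfolding carrier_onePlusF Fideal_eq by auto
  then show "finite (supp2 h)"
    using rep_one_plus_Esum(1) by blast
  have "{q. rep h q \<noteq> idmat q} \<subseteq> A"
    using rep_one_plus_Esum(2)[OF \<open>finite A\<close>, of c] h by auto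
  with \<open>finite A\<close> show "rep h \<in> carrier onePlusMinf"
    by (auto simp: carrier_onePlusMinf intro: finite_subset)
qed

lemma rep_onto_onePlusMinf:
  assumes "A \<in> carrier onePlusMinf"
  obtains h where "h \<in> carrier onePlusF" "rep h = A"
proof
  let ?S = "{q. A q \<noteq> idmat q}"
  let ?h = "\<lambda>p. monom_xy 0 0 p + Esum ?S (\<lambda>q. A q - idmat q) p"
  have "finite ?S"
    using assms by (simp add: carrier_onePlusMinf)
  then have "Esum ?S (\<lambda>q. A q - idmat q) \<in> Fideal"
    unfolding Fideal_eq by blast
  then show "?h \<in> carrier onePlusF"
    unfolding carrier_onePlusF by blast
  show "rep ?h = A"
    using rep_one_plus_Esum(2)[OF \<open>finite ?S\<close>, of "\<lambda>q. A q - idmat q"] by auto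
qed

lemma mem_onePlusF_iff:
  assumes "finite (supp2 h)"
  shows "h \<in> carrier onePlusF \<longleftrightarrow> rep h \<in> carrier onePlusMinf"
proof
  assume "rep h \<in> carrier onePlusMinf"
  then obtain h' where "h' \<in> carrier onePlusF" "rep h' = rep h"
    by (rule rep_onto_onePlusMinf)
  moreover from this have "h' = h"
    using rep_inj onePlusF_D(1) assms by metis
  ultimately show "h \<in> carrier onePlusF"
    by simp
qed (rule onePlusF_D(2))

lemma onePlusMinf_eq_idmat_outside:
  assumes "A \<in> carrier onePlusMinf"
  obtains K where "\<And>a b. K \<le> a \<or> K \<le> b \<Longrightarrow> A (a, b) = idmat (a, b)"
proof -
  let ?P = "{p. A p \<noteq> idmat p}"
  have "finite ?P"
    using assms by (simp add: carrier_onePlusMinf)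
  then obtain K1 K2 where K: "\<forall>n\<in>fst ` ?P. n < K1" "\<forall>n\<in>snd ` ?P. n < K2"
    using finite_imageI[OF \<open>finite ?P\<close>, of fst] finite_imageI[OF \<open>finite ?P\<close>, of snd]
    unfolding finite_nat_set_iff_bounded by blast
  have "A (a, b) = idmat (a, b)" if "K1 + K2 \<le> a \<or> K1 + K2 \<le> b" for a b
  proof (rule ccontr)
    assume "A (a, b) \<noteq> idmat (a, b)"
    then have "a < K1" "b < K2"
      using K by force+
    with that show False
      by linarith
  qed
  then show ?thesis
    using that by blast
qed

lemma matmult_mem_onePlusMinf:
  assumes A: "A \<in> carrier onePlusMinf" and B: "B \<in> carrier onePlusMinf"
  shows "matmult A B \<in> carrier onePlusMinf"
proof -
  obtain K1 K2 where
    K1: "\<And>a b. K1 \<le> a \<or> K1 \<le> b \<Longrightarrow> A (a, b) = idmat (a, b)" and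
    K2: "\<And>a b. K2 \<le> a \<or> K2 \<le> b \<Longrightarrow> B (a, b) = idmat (a, b)"
    by (metis A B onePlusMinf_eq_idmat_outside)
  define K where "K = K1 + K2"
  have "matmult A B (a, c) = idmat (a, c)" if "K \<le> a \<or> K \<le> c" for a c
  proof -
    have "A (a, j) \<noteq> 0 \<Longrightarrow> j \<in> insert a {..<K}" for j
      using K1[of a j] by (cases "K \<le> j") (auto simp: K_def idmat_apply split: if_splits)
    then have "matmult A B (a, c) = (\<Sum>j\<in>insert a {..<K}. A (a, j) * B (j, c))"
      by (intro matmult_eq_sum) auto
    also have "\<dots> = idmat (a, c)"
    proof (cases "K \<le> a")
      case True
      then have "(\<Sum>j\<in>insert a {..<K}. A (a, j) * B (j, c)) = (\<Sum>j\<in>insert a {..<K}. idmat (a, j) * B (j, c))"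
        using K1 by (simp add: K_def)
      with True show ?thesis
        by (simp add: sum_idmat_left K2 K_def)
    next
      case False
      with that have "(\<Sum>j\<in>insert a {..<K}. A (a, j) * B (j, c)) = (\<Sum>j\<in>insert a {..<K}. A (a, j) * idmat (j, c))"
        using K2 by (simp add: K_def)
      with False that show ?thesis
        by (simp only: sum_idmat_right finite_insert finite_lessThan) (simp add: idmat_apply)
    qed
    finally show ?thesis .
  qed
  then have "{q. matmult A B q \<noteq> idmat q} \<subseteq> {..<K} \<times> {..<K}"
    by (auto simp: not_less[symmetric])
  then show ?thesis
    by (auto simp: carrier_onePlusMinf intro: finite_subset)
qed

lemma s1_mult_mem_onePlusF:
  "h \<in> carrier onePlusF \<Longrightarrow> h' \<in> carrier onePlusF \<Longrightarrow> s1_mult h h' \<in> carrier onePlusF"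
  by (simp add: mem_onePlusF_iff onePlusF_D finite_supp2_s1_mult rep_mult matmult_mem_onePlusMinf)

lemma one_mem_onePlusF: "monom_xy 0 0 \<in> carrier onePlusF"
  by (simp add: mem_onePlusF_iff rep_one carrier_onePlusMinf)

lemma monoid_onePlusF: "monoid (onePlusF :: (nat \<times> nat \<Rightarrow> 'a::field) monoid)"
proof -
  have "submonoid (carrier onePlusF) (S1 :: (nat \<times> nat \<Rightarrow> 'a) monoid)"
    by (rule submonoid.intro)
      (auto simp: carrier_S1 onePlusF_D s1_mult_mem_onePlusF one_mem_onePlusF)
  then show ?thesis
    using submonoid.submonoid_is_monoid[OF _ monoid_S1] by (simp add: onePlusF_def)
qed

interpretation onePlusF: monoid "onePlusF :: (nat \<times> nat \<Rightarrow> 'a::field) monoid"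
  by (rule monoid_onePlusF)

lemma Units_onePlusF_D:
  assumes "w \<in> Units (onePlusF :: (nat \<times> nat \<Rightarrow> 'a::field) monoid)"
  shows "w \<in> carrier onePlusF" "finite (supp2 w)" "w \<in> Units S1"
  using assms onePlusF_D(1) unfolding Units_def by (auto simp: carrier_S1)

lemma rep_Units:
  assumes "w \<in> Units (onePlusF :: (nat \<times> nat \<Rightarrow> 'a::field) monoid)"
  shows "rep w \<in> Units onePlusMinf"
proof -
  obtain w' where w: "w \<in> carrier onePlusF" and w': "w' \<in> carrier onePlusF"
    and "s1_mult w' w = monom_xy 0 0" "s1_mult w w' = monom_xy 0 0"
    using assms unfolding Units_def by auto
  then have "matmult (rep w') (rep w) = idmat" "matmult (rep w) (rep w') = idmat"
    by (simp_all add: rep_mult[symmetric] onePlusF_D(1) rep_one)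
  with onePlusF_D(2)[OF w] onePlusF_D(2)[OF w'] show ?thesis
    unfolding Units_def by auto
qed

lemma rep_onto_Units:
  assumes "A \<in> Units (onePlusMinf :: (nat \<times> nat \<Rightarrow> 'a::field) monoid)"
  obtains w where "w \<in> Units onePlusF" "rep w = A"
proof -
  obtain B where A: "A \<in> carrier onePlusMinf" and B: "B \<in> carrier onePlusMinf"
    and "matmult B A = idmat" "matmult A B = idmat"
    using assms unfolding Units_def by auto
  moreover obtain h where h: "h \<in> carrier onePlusF" "rep h = A"
    using rep_onto_onePlusMinf[OF A] .
  moreover obtain h' where h': "h' \<in> carrier onePlusF" "rep h' = B"
    using rep_onto_onePlusMinf[OF B] .
  ultimately have "s1_mult h' h = monom_xy 0 0" "s1_mult h h' = monom_xy 0 0"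
    by (auto intro: rep_inj[OF finite_supp2_s1_mult finite_supp2_one]
        simp: onePlusF_D(1) rep_mult rep_one)
  with h h' have "h \<in> Units onePlusF"
    unfolding Units_def by auto
  with h show thesis
    using that by blast
qed

lemma rep_iso: "rep \<in> iso (units_of (onePlusF :: (nat \<times> nat \<Rightarrow> 'a::field) monoid)) GL_inf"
proof (rule isoI)
  show "rep \<in> hom (units_of (onePlusF :: (nat \<times> nat \<Rightarrow> 'a) monoid)) GL_inf"
    by (rule homI)
      (auto simp: units_of_def GL_inf_def rep_Units rep_mult Units_onePlusF_D)
  have "inj_on rep (Units (onePlusF :: (nat \<times> nat \<Rightarrow> 'a) monoid))"
    by (auto intro!: inj_onI rep_inj simp: Units_onePlusF_D)
  moreover have "rep ` Units (onePlusF :: (nat \<times> nat \<Rightarrow> 'a) monoid) = Units onePlusMinf"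
    using rep_Units rep_onto_Units by (blast elim!: rep_onto_Units)
  ultimately show "bij_betw rep (carrier (units_of (onePlusF :: (nat \<times> nat \<Rightarrow> 'a) monoid))) (carrier GL_inf)"
    by (simp add: bij_betw_def units_of_def GL_inf_def)
qed

section \<open>The Laurent symbol\<close>

definition mon_deg :: "nat \<times> nat \<Rightarrow> int" where
  "mon_deg p = int (fst p) - int (snd p)"

text \<open>\<open>symbol f d\<close> is the coefficient of \<open>x\<^sup>d\<close> in the image of \<open>f\<close> under the homomorphism
  \<open>S\<^sub>1 \<rightarrow> K[x, x\<^sup>-\<^sup>1]\<close>, \<open>y \<mapsto> x\<^sup>-\<^sup>1\<close>, whose kernel is \<open>F\<close>.\<close>

definition symbol :: "(nat \<times> nat \<Rightarrow> 'a::field) \<Rightarrow> int \<Rightarrow> 'a" where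
  "symbol f d = (\<Sum>p\<in>supp2 f. if mon_deg p = d then f p else 0)"

definition supp_weight :: "(nat \<times> nat \<Rightarrow> 'a::zero) \<Rightarrow> nat" where
  "supp_weight f = (\<Sum>p\<in>supp2 f. fst p + snd p)"

lemma supp_weight_ge: "finite (supp2 f) \<Longrightarrow> (i, j) \<in> supp2 f \<Longrightarrow> i + j \<le> supp_weight f"
  unfolding supp_weight_def using member_le_sum[of "(i, j)" "supp2 f" "\<lambda>p. fst p + snd p"] by simp

lemma rep_eq_0_off_band:
  assumes "finite (supp2 f)" "int (supp_weight f) < \<bar>int a - int b\<bar>"
  shows "rep f (a, b) = 0"
proof (rule ccontr)
  assume "rep f (a, b) \<noteq> 0"
  then obtain i j where "(i, j) \<in> supp2 f" "mon_rep (i, j) (a, b) \<noteq> (0::'a)"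
    unfolding rep_def by (auto elim: sum.not_neutral_contains_not_neutral)
  with supp_weight_ge[OF assms(1)] assms(2) show False
    by (fastforce split: if_splits)
qed

lemma rep_eq_symbol:
  assumes f: "finite (supp2 f)" and "supp_weight f \<le> a" "supp_weight f \<le> b"
  shows "rep f (a, b) = symbol f (int a - int b)"
  unfolding rep_def symbol_def split_conv
proof (rule sum.cong[OF refl])
  fix p assume "p \<in> supp2 f"
  moreover obtain i j where p: "p = (i, j)" by fastforce
  ultimately have "i \<le> a" "j \<le> b"
    using supp_weight_ge[OF f] assms by fastforce+
  then show "f p * mon_rep p (a, b) = (if mon_deg p = int a - int b then f p else 0)"
    by (auto simp: p mon_deg_def)
qed

lemma symbol_eq_sum:
  "finite A \<Longrightarrow> supp2 f \<subseteq> A \<Longrightarrow> symbol f d = (\<Sum>p\<in>A. if mon_deg p = d then f p else 0)"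
  unfolding symbol_def by (auto intro!: sum.mono_neutral_left simp: supp2_def split: if_splits)

lemma symbol_nonzero:
  assumes "finite (supp2 f)" "symbol f e \<noteq> 0"
  shows "\<bar>e\<bar> \<le> int (supp_weight f)" "e \<in> mon_deg ` supp2 f"
proof -
  from assms obtain i j where "(i, j) \<in> supp2 f" "mon_deg (i, j) = e"
    unfolding symbol_def by (auto elim: sum.not_neutral_contains_not_neutral split: if_splits)
  with supp_weight_ge[OF assms(1)] show "\<bar>e\<bar> \<le> int (supp_weight f)" "e \<in> mon_deg ` supp2 f"
    by (force simp: mon_deg_def)+
qed

lemma mon_deg_mult: "mon_deg (mon_mult p q) = mon_deg p + mon_deg q"
  by (cases p; cases q) (auto simp: mon_mult_def mon_deg_def)

lemma symbol_mult:
  fixes f g :: "nat \<times> nat \<Rightarrow> 'a::field"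
  assumes f: "finite (supp2 f)" and g: "finite (supp2 g)"
  shows "symbol (s1_mult f g) d = (\<Sum>e\<in>mon_deg ` supp2 f. symbol f e * symbol g (d - e))"
proof -
  let ?C = "(\<lambda>(p, q). mon_mult p q) ` (supp2 f \<times> supp2 g)"
  let ?E = "mon_deg ` supp2 f"
  have "symbol (s1_mult f g) d = (\<Sum>s\<in>?C. (if mon_deg s = d then 1 else 0) *
      (\<Sum>p\<in>supp2 f. \<Sum>q\<in>supp2 g. if mon_mult p q = s then f p * g q else 0))"
    using f g by (subst symbol_eq_sum[OF _ supp2_s1_mult_subset]) (auto intro!: sum.cong simp: s1_mult_eq_sum[OF f g])
  also have "\<dots> = (\<Sum>p\<in>supp2 f. \<Sum>q\<in>supp2 g. (if mon_deg (mon_mult p q) = d then 1 else 0) * (f p * g q))"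
    by (rule sum_fibres_collapse) (use f g in auto)
  also have "\<dots> = (\<Sum>p\<in>supp2 f. \<Sum>q\<in>supp2 g. if mon_deg p + mon_deg q = d then f p * g q else 0)"
    by (intro sum.cong refl) (simp add: mon_deg_mult)
  also have "\<dots> = (\<Sum>e\<in>?E. symbol f e * symbol g (d - e))"
  proof -
    have "(\<Sum>e\<in>?E. (if mon_deg p = e then f p else 0) * (if mon_deg q = d - e then g q else 0))
        = (if mon_deg p + mon_deg q = d then f p * g q else 0)" if "p \<in> supp2 f" for p q
    proof -
      have "(\<Sum>e\<in>?E. (if mon_deg p = e then f p else 0) * (if mon_deg q = d - e then g q else 0))
          = (\<Sum>e\<in>?E. if mon_deg p = e then f p * (if mon_deg q = d - e then g q else 0) else 0)"
        by (intro sum.cong refl) simp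
      with that f show ?thesis
        by auto
    qed
    then have "(\<Sum>p\<in>supp2 f. \<Sum>q\<in>supp2 g. if mon_deg p + mon_deg q = d then f p * g q else 0)
        = (\<Sum>p\<in>supp2 f. \<Sum>q\<in>supp2 g. \<Sum>e\<in>?E.
            (if mon_deg p = e then f p else 0) * (if mon_deg q = d - e then g q else 0))"
      by simp
    also have "\<dots> = (\<Sum>e\<in>?E. \<Sum>p\<in>supp2 f. \<Sum>q\<in>supp2 g.
            (if mon_deg p = e then f p else 0) * (if mon_deg q = d - e then g q else 0))"
      by (subst sum.swap) (simp only: sum.swap[of _ "supp2 g"])
    finally show ?thesis
      by (simp add: symbol_def sum_product)
  qed
  finally show ?thesis .
qed

lemma symbol_scal: "symbol (scal c) d = (if d = 0 then c else 0)"
proof -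
  have "symbol (scal c) d = (\<Sum>p\<in>{(0, 0)}. if mon_deg p = d then scal c p else 0)"
    by (rule symbol_eq_sum) (auto simp: supp2_def scal_apply split: if_splits)
  then show ?thesis
    by (auto simp: mon_deg_def scal_apply)
qed

lemma symbol_one: "symbol (monom_xy 0 0 :: _ \<Rightarrow> 'a::field) d = (if d = 0 then 1 else 0)"
  by (simp add: monom_xy_0_0 symbol_scal)

lemma symbol_smult:
  assumes "finite (supp2 f)"
  shows "symbol (\<lambda>p. c * f p) e = c * symbol f e"
proof -
  have "symbol (\<lambda>p. c * f p) e = (\<Sum>p\<in>supp2 f. if mon_deg p = e then c * f p else 0)"
    by (rule symbol_eq_sum[OF assms]) (auto simp: supp2_def)
  then show ?thesis
    by (simp add: symbol_def sum_distrib_left if_distrib[of "(*) c"] cong: if_cong)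
qed

lemma convolution_at_top:
  fixes t u :: int
  assumes "finite S" "t \<in> S" "\<And>e. e \<in> S \<Longrightarrow> e \<le> t" "\<And>e. \<beta> e \<noteq> 0 \<Longrightarrow> e \<le> u"
  shows "(\<Sum>e\<in>S. \<alpha> e * \<beta> (t + u - e)) = \<alpha> t * (\<beta> u :: 'a::comm_semiring_0)"
proof -
  have "(\<Sum>e\<in>S - {t}. \<alpha> e * \<beta> (t + u - e)) = 0"
  proof (rule sum.neutral, rule ballI)
    fix e assume "e \<in> S - {t}"
    then have "u < t + u - e"
      using assms(3)[of e] by auto
    then show "\<alpha> e * \<beta> (t + u - e) = 0"
      using assms(4)[of "t + u - e"] by fastforce
  qed
  then show ?thesis
    using sum.remove[OF assms(1,2), of "\<lambda>e. \<alpha> e * \<beta> (t + u - e)"] by simp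
qed

lemma convolution_at_bottom:
  fixes s u :: int
  assumes "finite S" "s \<in> S" "\<And>e. e \<in> S \<Longrightarrow> s \<le> e" "\<And>e. \<beta> e \<noteq> 0 \<Longrightarrow> u \<le> e"
  shows "(\<Sum>e\<in>S. \<alpha> e * \<beta> (s + u - e)) = \<alpha> s * (\<beta> u :: 'a::comm_semiring_0)"
proof -
  have "(\<Sum>e\<in>S - {s}. \<alpha> e * \<beta> (s + u - e)) = 0"
  proof (rule sum.neutral, rule ballI)
    fix e assume "e \<in> S - {s}"
    then have "s + u - e < u"
      using assms(3)[of e] by auto
    then show "\<alpha> e * \<beta> (s + u - e) = 0"
      using assms(4)[of "s + u - e"] by fastforce
  qed
  then show ?thesis
    using sum.remove[OF assms(1,2), of "\<lambda>e. \<alpha> e * \<beta> (s + u - e)"] by simp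
qed

text \<open>The top and the bottom coefficients of \<open>\<alpha> * \<beta> = 1\<close> are products of extreme coefficients,
  so both supports are singletons.\<close>

lemma laurent_units_monomial:
  fixes \<alpha> \<beta> :: "int \<Rightarrow> 'a::idom"
  assumes fin: "finite {e. \<alpha> e \<noteq> 0}" "finite {e. \<beta> e \<noteq> 0}"
    and conv: "\<And>d. (\<Sum>e\<in>{e. \<alpha> e \<noteq> 0}. \<alpha> e * \<beta> (d - e)) = (if d = 0 then 1 else 0)"
  obtains k where "{e. \<alpha> e \<noteq> 0} = {k}" "{e. \<beta> e \<noteq> 0} = {-k}"
proof -
  define A B where "A = {e. \<alpha> e \<noteq> 0}" and "B = {e. \<beta> e \<noteq> 0}"
  have "A \<noteq> {}"
    using conv[of 0] by (auto simp: A_def simp del: Collect_empty_eq)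
  have "B \<noteq> {}"
  proof
    assume "B = {}"
    then have "\<beta> e = 0" for e
      by (auto simp: B_def)
    with conv[of 0] show False
      by simp
  qed
  moreover have "finite A" "finite B"
    using fin by (simp_all add: A_def B_def)
  ultimately have A: "Min A \<in> A" "Max A \<in> A" "\<And>e. e \<in> A \<Longrightarrow> Min A \<le> e \<and> e \<le> Max A"
    and B: "Min B \<in> B" "Max B \<in> B" "\<And>e. e \<in> B \<Longrightarrow> Min B \<le> e \<and> e \<le> Max B"
    using \<open>A \<noteq> {}\<close> by auto
  have "(\<Sum>e\<in>A. \<alpha> e * \<beta> (Max A + Max B - e)) = \<alpha> (Max A) * \<beta> (Max B)"
    using fin A B by (intro convolution_at_top) (auto simp: A_def B_def)
  moreover have "(\<Sum>e\<in>A. \<alpha> e * \<beta> (Min A + Min B - e)) = \<alpha> (Min A) * \<beta> (Min B)"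
    using fin A B by (intro convolution_at_bottom) (auto simp: A_def B_def)
  moreover have "\<alpha> (Max A) * \<beta> (Max B) \<noteq> 0" "\<alpha> (Min A) * \<beta> (Min B) \<noteq> 0"
    using A B by (simp_all add: A_def B_def)
  ultimately have "Max A + Max B = 0" "Min A + Min B = 0"
    using conv[of "Max A + Max B"] conv[of "Min A + Min B"] by (auto simp: A_def split: if_splits)
  then have "Min A = Max A" "Min B = Max B"
    using A(1) B(1) A(3)[of "Min A"] B(3)[of "Min B"] A(3)[of "Max A"] B(3)[of "Max B"] A(2) B(2)
    by linarith+
  moreover have "Max B = - Max A"
    using \<open>Max A + Max B = 0\<close> by simp
  ultimately have "A = {Max A}" "B = {- Max A}"
    using A B by (metis antisym singleton_iff subsetI subset_antisym)+
  then show thesis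
    using that by (simp add: A_def B_def)
qed

section \<open>The index argument\<close>

lemma corner_sums_diff:
  fixes X :: "nat \<Rightarrow> nat \<Rightarrow> 'a::ab_group_add"
  assumes "M \<le> L"
  shows "(\<Sum>a<M. \<Sum>b<L. X a b) - (\<Sum>b<M. \<Sum>a<L. X a b)
       = (\<Sum>a<M. \<Sum>b\<in>{M..<L}. X a b) - (\<Sum>b<M. \<Sum>a\<in>{M..<L}. X a b)"
proof -
  have split: "sum f {..<L} = sum f {..<M} + sum f {M..<L}" for f :: "nat \<Rightarrow> 'a"
    using sum.union_disjoint[of "{..<M}" "{M..<L}" f] assms by (simp add: ivl_disj_un_one(2) ivl_disj_int_one(2))
  have "(\<Sum>a<M. \<Sum>b<M. X a b) = (\<Sum>b<M. \<Sum>a<M. X a b)"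
    by (rule sum.swap)
  then show ?thesis
    by (simp add: split sum.distrib)
qed

lemma subdiagonal_corner_count_nonzero:
  assumes "0 < k" "k \<le> int W"
  shows "(\<Sum>b<2 * W. \<Sum>a\<in>{2 * W..<3 * W + 1}. of_bool (W \<le> b \<and> int a - int b = k)) \<noteq> (0::'a::semiring_char_0)"
proof -
  define C where "C = {..<2 * W} \<times> {2 * W..<3 * W + 1} \<inter> {x. W \<le> fst x \<and> int (snd x) - int (fst x) = k}"
  have "(\<Sum>b<2 * W. \<Sum>a\<in>{2 * W..<3 * W + 1}. of_bool (W \<le> b \<and> int a - int b = k))
      = (\<Sum>x\<in>{..<2 * W} \<times> {2 * W..<3 * W + 1}. of_bool (W \<le> fst x \<and> int (snd x) - int (fst x) = k) :: 'a)"
    by (simp only: sum.cartesian_product case_prod_unfold)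
  also have "\<dots> = of_nat (card C)"
    unfolding C_def by (rule sum_of_bool_eq) (auto intro: finite_cartesian_product)
  finally have "(\<Sum>b<2 * W. \<Sum>a\<in>{2 * W..<3 * W + 1}. of_bool (W \<le> b \<and> int a - int b = k)) = (of_nat (card C) :: 'a)" .
  moreover have "(2 * W - nat k, 2 * W) \<in> C" "finite C"
    using assms by (auto simp: C_def)
  then have "card C \<noteq> 0"
    by (auto simp: card_eq_0_iff)
  ultimately show ?thesis
    by simp
qed

lemma sum_diag_matmult_eq_idmat:
  fixes A B :: "nat \<times> nat \<Rightarrow> 'a::field"
  assumes "matmult A B = idmat" and band: "\<And>a b. int W < \<bar>int a - int b\<bar> \<Longrightarrow> A (a, b) = 0"
    and "M + W \<le> L"
  shows "(\<Sum>a<M. \<Sum>b<L. A (a, b) * B (b, a)) = of_nat M"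
proof -
  have "(\<Sum>b<L. A (a, b) * B (b, a)) = matmult A B (a, a)" if "a < M" for a
    using that band assms(3) by (intro matmult_eq_sum[symmetric]) force+
  then show ?thesis
    using assms(1) by (simp add: idmat_apply)
qed

text \<open>Far down the diagonal \<open>rep u\<close> and \<open>rep v\<close> are the Toeplitz matrices of \<open>c x\<^sup>k\<close> and
  \<open>c\<^sup>-\<^sup>1 x\<^sup>-\<^sup>k\<close>.  Summing the diagonal of \<open>rep u * rep v = 1\<close> and of \<open>rep v * rep u = 1\<close> over
  the first \<open>M\<close> indices gives the same value \<open>M\<close>, while the difference of the two sums counts
  the entries of the \<open>k\<close>-th subdiagonal crossing the corner; so \<open>k \<le> 0\<close> in characteristic zero.\<close>

lemma unit_symbol_degree_nonpos:
  fixes u v :: "nat \<times> nat \<Rightarrow> 'a::field_char_0"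
  assumes fu: "finite (supp2 u)" and fv: "finite (supp2 v)"
    and uv: "s1_mult u v = monom_xy 0 0" and vu: "s1_mult v u = monom_xy 0 0"
    and su: "\<And>e. symbol u e = (if e = k then c else 0)"
    and sv: "\<And>e. symbol v e = (if e = -k then c' else 0)"
    and cc: "c * c' = 1"
  shows "k \<le> 0"
proof (rule ccontr)
  assume "\<not> k \<le> 0"
  define W where "W = supp_weight u + supp_weight v"
  define M L where "M = 2 * W" and "L = 3 * W + 1"
  define X where "X a b = rep u (a, b) * rep v (b, a)" for a b
  have band: "rep u (a, b) = 0" "rep v (a, b) = 0" if "int W < \<bar>int a - int b\<bar>" for a b
    using that rep_eq_0_off_band[OF fu, of a b] rep_eq_0_off_band[OF fv, of a b] by (simp_all add: W_def)
  have toeplitz: "rep u (a, b) = symbol u (int a - int b)" "rep v (a, b) = symbol v (int a - int b)"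
    if "W \<le> a" "W \<le> b" for a b
    using that rep_eq_symbol[OF fu, of a b] rep_eq_symbol[OF fv, of a b] by (simp_all add: W_def)
  have "c \<noteq> 0"
    using cc by auto
  then have "k \<le> int W"
    using symbol_nonzero(1)[OF fu, of k] su by (auto simp: W_def)
  have rows: "(\<Sum>a<M. \<Sum>b<L. X a b) = of_nat M"
    unfolding X_def using band(1)
    by (intro sum_diag_matmult_eq_idmat) (auto simp: rep_mult[symmetric] fu fv uv rep_one M_def L_def)
  have cols: "(\<Sum>b<M. \<Sum>a<L. X a b) = of_nat M"
    unfolding X_def mult.commute[of "rep u _"] using band(2)
    by (intro sum_diag_matmult_eq_idmat) (auto simp: rep_mult[symmetric] fu fv vu rep_one M_def L_def)
  have "X a b = 0" if "a < M" "M \<le> b" for a b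
    using that band toeplitz[of a b] su \<open>\<not> k \<le> 0\<close>
    by (cases "W \<le> a") (auto simp: X_def M_def)
  then have upper: "(\<Sum>a<M. \<Sum>b\<in>{M..<L}. X a b) = 0"
    by simp
  have "X a b = of_bool (W \<le> b \<and> int a - int b = k)" if "b < M" "M \<le> a" for a b
    using that band toeplitz[of a b] toeplitz[of b a] su sv cc
    by (cases "W \<le> b") (auto simp: X_def M_def)
  then have "(\<Sum>b<M. \<Sum>a\<in>{M..<L}. X a b) = (\<Sum>b<M. \<Sum>a\<in>{M..<L}. of_bool (W \<le> b \<and> int a - int b = k))"
    by simp
  also have "\<dots> \<noteq> 0"
    unfolding M_def L_def using \<open>\<not> k \<le> 0\<close> \<open>k \<le> int W\<close> by (intro subdiagonal_corner_count_nonzero) auto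
  finally have lower: "(\<Sum>b<M. \<Sum>a\<in>{M..<L}. X a b) \<noteq> 0" .
  with corner_sums_diff[of M L X] rows cols upper show False
    by (simp add: M_def L_def)
qed

lemma symbol_onePlusF:
  assumes w: "w \<in> carrier onePlusF"
  shows "symbol w e = (if e = 0 then 1 else 0)"
proof -
  obtain K where K: "\<And>a b. K \<le> a \<or> K \<le> b \<Longrightarrow> rep w (a, b) = idmat (a, b)"
    using onePlusMinf_eq_idmat_outside[OF onePlusF_D(2)[OF w]] by blast
  define N where "N = supp_weight w + K"
  have "symbol w e = rep w (N + nat e, N + nat (- e))"
    by (subst rep_eq_symbol[OF onePlusF_D(1)[OF w]]) (auto simp: N_def)
  also have "\<dots> = idmat (N + nat e, N + nat (- e))"
    by (rule K) (simp add: N_def)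
  finally show ?thesis
    by (auto simp: idmat_apply)
qed

lemma onePlusF_if_symbol_eq_one:
  assumes f: "finite (supp2 f)" and sf: "\<And>e. symbol f e = (if e = 0 then 1 else 0)"
  shows "f \<in> carrier onePlusF"
proof -
  define W where "W = supp_weight f"
  have "rep f (a, b) = idmat (a, b)" if "2 * W \<le> a \<or> 2 * W \<le> b" for a b
  proof (cases "W \<le> a \<and> W \<le> b")
    case True
    then show ?thesis
      using rep_eq_symbol[OF f] by (simp add: W_def sf idmat_apply)
  next
    case False
    with that have "int W < \<bar>int a - int b\<bar>"
      by auto
    then show ?thesis
      using rep_eq_0_off_band[OF f] by (auto simp: W_def idmat_apply)
  qed
  then have "{q. rep f q \<noteq> idmat q} \<subseteq> {..<2 * W} \<times> {..<2 * W}"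
    by (auto simp: not_less[symmetric])
  then show ?thesis
    using f by (auto simp: mem_onePlusF_iff carrier_onePlusMinf intro: finite_subset)
qed

lemma mem_onePlusF_iff_symbol:
  "finite (supp2 f) \<Longrightarrow> f \<in> carrier onePlusF \<longleftrightarrow> (\<forall>e. symbol f e = (if e = 0 then 1 else 0))"
  using symbol_onePlusF onePlusF_if_symbol_eq_one by blast

lemma symbol_right_inverse_monomial:
  fixes u v :: "nat \<times> nat \<Rightarrow> 'a::field"
  assumes fu: "finite (supp2 u)" and fv: "finite (supp2 v)" and uv: "s1_mult u v = monom_xy 0 0"
  obtains k c c' where "\<And>e. symbol u e = (if e = k then c else 0)"
    "\<And>e. symbol v e = (if e = -k then c' else 0)" "c * c' = 1"
proof -
  have "{e. symbol u e \<noteq> 0} \<subseteq> mon_deg ` supp2 u" "{e. symbol v e \<noteq> 0} \<subseteq> mon_deg ` supp2 v"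
    using symbol_nonzero(2)[OF fu] symbol_nonzero(2)[OF fv] by blast+
  then have fin: "finite {e. symbol u e \<noteq> 0}" "finite {e. symbol v e \<noteq> 0}"
    using fu fv by (auto intro: finite_subset)
  have conv: "(\<Sum>e\<in>{e. symbol u e \<noteq> 0}. symbol u e * symbol v (d - e)) = (if d = 0 then 1 else 0)" for d
  proof -
    have "(\<Sum>e\<in>{e. symbol u e \<noteq> 0}. symbol u e * symbol v (d - e))
        = (\<Sum>e\<in>mon_deg ` supp2 u. symbol u e * symbol v (d - e))"
      by (rule sum.mono_neutral_left) (use fu symbol_nonzero(2)[OF fu] in auto)
    also have "\<dots> = symbol (s1_mult u v) d"
      by (rule symbol_mult[OF fu fv, symmetric])
    finally show ?thesis
      by (simp add: uv symbol_one)
  qed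
  then obtain k where k: "{e. symbol u e \<noteq> 0} = {k}" "{e. symbol v e \<noteq> 0} = {-k}"
    using laurent_units_monomial[OF fin] by blast
  show thesis
  proof
    show "symbol u e = (if e = k then symbol u k else 0)" "symbol v e = (if e = -k then symbol v (-k) else 0)" for e
      using k by auto
    show "symbol u k * symbol v (-k) = 1"
      using conv[of 0] k(1) by simp
  qed
qed

lemma Units_S1_decomp:
  fixes u :: "nat \<times> nat \<Rightarrow> 'a::field_char_0"
  assumes "u \<in> Units S1"
  obtains c w where "c \<noteq> 0" "w \<in> Units onePlusF" "u = (\<lambda>p. c * w p)"
proof -
  obtain v where fu: "finite (supp2 u)" and fv: "finite (supp2 v)"
    and uv: "s1_mult u v = monom_xy 0 0" and vu: "s1_mult v u = monom_xy 0 0"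
    using assms unfolding Units_def carrier_S1 by auto
  obtain k c c' where su: "\<And>e. symbol u e = (if e = k then c else 0)"
    and sv: "\<And>e. symbol v e = (if e = -k then c' else 0)" and cc: "c * c' = 1"
    using symbol_right_inverse_monomial[OF fu fv uv] by blast
  have "k = 0"
    using unit_symbol_degree_nonpos[OF fu fv uv vu su sv cc]
      unit_symbol_degree_nonpos[OF fv fu vu uv, of "-k" c' c] sv su cc
    by (simp add: mult.commute)
  define w w' where "w = (\<lambda>p. inverse c * u p)" and "w' = (\<lambda>p. c * v p)"
  have c0: "c \<noteq> 0"
    using cc by auto
  have "w \<in> carrier onePlusF" "w' \<in> carrier onePlusF"
    unfolding w_def w'_def using fu fv cc c0 \<open>k = 0\<close>
    by (subst mem_onePlusF_iff_symbol; auto simp: symbol_smult su sv)+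
  moreover have "s1_mult w w' = monom_xy 0 0" "s1_mult w' w = monom_xy 0 0"
    using c0 by (simp_all add: w_def w'_def s1_mult_smult fu fv uv vu)
  ultimately have "w \<in> Units onePlusF"
    unfolding Units_def by auto
  moreover have "u = (\<lambda>p. c * w p)"
    using c0 by (simp add: w_def mult.assoc[symmetric])
  ultimately show thesis
    using that c0 by blast
qed

section \<open>The group of units of S_1\<close>

lemma smult_mem_Units_S1:
  assumes "c \<noteq> 0" "w \<in> Units onePlusF"
  shows "(\<lambda>p. c * w p) \<in> Units (S1 :: (nat \<times> nat \<Rightarrow> 'a::field) monoid)"
proof -
  have "scal c \<otimes>\<^bsub>S1\<^esub> w \<in> Units S1"
    using scal_in_Units_S1[OF assms(1)] Units_onePlusF_D(3)[OF assms(2)] by blast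
  then show ?thesis
    by (simp add: s1_mult_scal_left Units_onePlusF_D(2)[OF assms(2)])
qed

lemma Units_S1_eq_set_mult:
  "Units (S1 :: (nat \<times> nat \<Rightarrow> 'a::field_char_0) monoid) = Kstar_in_S1 <#>\<^bsub>S1\<^esub> Units onePlusF"
proof (intro equalityI subsetI)
  fix u :: "nat \<times> nat \<Rightarrow> 'a"
  assume "u \<in> Units S1"
  then obtain c w where "c \<noteq> 0" "w \<in> Units onePlusF" "u = (\<lambda>p. c * w p)"
    by (rule Units_S1_decomp)
  moreover from this have "u = scal c \<otimes>\<^bsub>S1\<^esub> w"
    by (simp add: s1_mult_scal_left Units_onePlusF_D(2))
  ultimately show "u \<in> Kstar_in_S1 <#>\<^bsub>S1\<^esub> Units onePlusF"
    unfolding set_mult_def Kstar_in_S1_def by blast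
next
  fix u :: "nat \<times> nat \<Rightarrow> 'a"
  assume "u \<in> Kstar_in_S1 <#>\<^bsub>S1\<^esub> Units onePlusF"
  then obtain c w where "c \<noteq> 0" "w \<in> Units onePlusF" "u = scal c \<otimes>\<^bsub>S1\<^esub> w"
    unfolding set_mult_def Kstar_in_S1_def by blast
  then show "u \<in> Units S1"
    by (simp add: s1_mult_scal_left Units_onePlusF_D(2) smult_mem_Units_S1)
qed

lemma group_Kmult: "group (Kmult :: 'a::field monoid)"
  by (rule groupI) (auto simp: Kmult_def intro: exI[of _ "inverse _"])

lemma scale_iso:
  "(\<lambda>(c, w). \<lambda>p. c * w p)
     \<in> iso (Kmult \<times>\<times> units_of onePlusF) (units_of (S1 :: (nat \<times> nat \<Rightarrow> 'a::field_char_0) monoid))"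
proof (rule isoI)
  show "(\<lambda>(c, w). \<lambda>p. c * w p) \<in> hom (Kmult \<times>\<times> units_of onePlusF) (units_of (S1 :: (nat \<times> nat \<Rightarrow> 'a) monoid))"
    by (rule homI)
      (auto simp: Kmult_def units_of_def smult_mem_Units_S1 s1_mult_smult Units_onePlusF_D(2))
  have "inj_on (\<lambda>(c, w). \<lambda>p. c * w p) (carrier (Kmult \<times>\<times> units_of (onePlusF :: (nat \<times> nat \<Rightarrow> 'a) monoid)))"
  proof (rule inj_onI)
    fix x y
    assume "x \<in> carrier (Kmult \<times>\<times> units_of (onePlusF :: (nat \<times> nat \<Rightarrow> 'a) monoid))"
      and "y \<in> carrier (Kmult \<times>\<times> units_of (onePlusF :: (nat \<times> nat \<Rightarrow> 'a) monoid))"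
      and "(\<lambda>(c, w). \<lambda>p. c * w p) x = (\<lambda>(c, w). \<lambda>p. c * w p) y"
    moreover obtain c w c' w' where "x = (c, w)" "y = (c', w')"
      by fastforce
    ultimately have c: "c \<noteq> 0" and w: "w \<in> Units onePlusF" and w': "w' \<in> Units onePlusF"
      and eq: "(\<lambda>p. c * w p) = (\<lambda>p. c' * w' p)"
      by (auto simp: Kmult_def units_of_def)
    have "c = c'"
      using arg_cong[OF eq, of "\<lambda>f. symbol f 0"] w w'
      by (simp add: symbol_smult symbol_onePlusF Units_onePlusF_D)
    with eq c have "w = w'"
      by (auto simp: fun_eq_iff)
    with \<open>c = c'\<close> show "x = y"
      by (simp add: \<open>x = (c, w)\<close> \<open>y = (c', w')\<close>)
  qed
  moreover have "(\<lambda>(c, w). \<lambda>p. c * w p) ` carrier (Kmult \<times>\<times> units_of onePlusF)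
      = carrier (units_of (S1 :: (nat \<times> nat \<Rightarrow> 'a) monoid))"
    by (auto simp: Kmult_def units_of_def smult_mem_Units_S1 image_iff elim!: Units_S1_decomp)
  ultimately show "bij_betw (\<lambda>(c, w). \<lambda>p. c * w p) (carrier (Kmult \<times>\<times> units_of onePlusF))
      (carrier (units_of (S1 :: (nat \<times> nat \<Rightarrow> 'a) monoid)))"
    by (simp add: bij_betw_def)
qed

lemma group_units_onePlusF: "group (units_of (onePlusF :: (nat \<times> nat \<Rightarrow> 'a::field) monoid))"
  by (rule monoid.units_group[OF monoid_onePlusF])

lemma units_S1_iso_Kmult_GL_inf:
  "units_of (S1 :: (nat \<times> nat \<Rightarrow> 'a::field_char_0) monoid)
     \<cong> (Kmult :: 'a monoid) \<times>\<times> (GL_inf :: (nat \<times> nat \<Rightarrow> 'a) monoid)"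
proof -
  have "(Kmult :: 'a monoid) \<times>\<times> units_of (onePlusF :: (nat \<times> nat \<Rightarrow> 'a) monoid)
      \<cong> units_of (S1 :: (nat \<times> nat \<Rightarrow> 'a) monoid)"
    by (rule is_isoI[OF scale_iso])
  then have "units_of (S1 :: (nat \<times> nat \<Rightarrow> 'a) monoid)
      \<cong> (Kmult :: 'a monoid) \<times>\<times> units_of (onePlusF :: (nat \<times> nat \<Rightarrow> 'a) monoid)"
    by (rule group.iso_sym[OF DirProd_group[OF group_Kmult group_units_onePlusF]])
  also have "\<dots> \<cong> (Kmult :: 'a monoid) \<times>\<times> (GL_inf :: (nat \<times> nat \<Rightarrow> 'a) monoid)"
    by (rule group.DirProd_iso_trans[OF group_Kmult iso_refl is_isoI[OF rep_iso]])
  finally show ?thesis .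
qed

section \<open>Centres\<close>

definition transvection :: "nat \<Rightarrow> nat \<Rightarrow> 'a \<Rightarrow> (nat \<times> nat \<Rightarrow> 'a::field)" where
  "transvection i j t = (\<lambda>p. monom_xy 0 0 p + t * Emat i j p)"

lemma finite_supp2_transvection [simp]: "finite (supp2 (transvection i j t))"
  unfolding transvection_def by (intro finite_supp2_add finite_supp2_smult) simp_all

lemma rep_transvection:
  "rep (transvection i j t) = (\<lambda>q. idmat q + (if q = (i, j) then t else (0::'a::field)))"
  unfolding transvection_def
  by (rule ext) (auto simp: rep_add[OF finite_supp2_one] finite_supp2_smult rep_smult rep_one rep_Emat)

lemma matmult_transvection_left:
  "matmult (\<lambda>q. idmat q + (if q = (i, j) then t else (0::'a::field))) B (a, b)
     = B (a, b) + (if a = i then t * B (j, b) else 0)"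
proof -
  have "matmult (\<lambda>q. idmat q + (if q = (i, j) then t else 0)) B (a, b)
      = (\<Sum>c\<in>{a, j}. (idmat (a, c) + (if (a, c) = (i, j) then t else 0)) * B (c, b))"
    by (rule matmult_eq_sum) (auto simp: idmat_apply split: if_splits)
  then show ?thesis
    by (cases "a = j") (auto simp: idmat_apply distrib_right)
qed

lemma matmult_transvection_right:
  fixes A :: "nat \<times> nat \<Rightarrow> 'a::field"
  assumes "finite S" "\<And>c. A (a, c) \<noteq> 0 \<Longrightarrow> c \<in> S"
  shows "matmult A (\<lambda>q. idmat q + (if q = (i, j) then t else 0)) (a, b)
     = A (a, b) + (if b = j then t * A (a, i) else 0)"
proof -
  let ?S = "insert b (insert i S)"
  have "matmult A (\<lambda>q. idmat q + (if q = (i, j) then t else 0)) (a, b)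
      = (\<Sum>c\<in>?S. A (a, c) * idmat (c, b)) + (\<Sum>c\<in>?S. if c = i then (if b = j then t * A (a, c) else 0) else 0)"
    unfolding sum.distrib[symmetric] using assms
    by (subst matmult_eq_sum[of ?S]) (auto intro!: sum.cong simp: distrib_left)
  then show ?thesis
    using assms(1) by (simp add: sum_idmat_right)
qed

lemma transvection_mem_Units_onePlusF:
  assumes "i \<noteq> j"
  shows "transvection i j (1::'a::field) \<in> Units onePlusF"
proof -
  have mem: "transvection i j t \<in> carrier onePlusF" for t :: 'a
  proof -
    have "{q. rep (transvection i j t) q \<noteq> idmat q} \<subseteq> {(i, j)}"
      by (auto simp: rep_transvection)
    then show ?thesis
      by (auto simp: mem_onePlusF_iff carrier_onePlusMinf intro: finite_subset)
  qed
  have inv: "s1_mult (transvection i j s) (transvection i j (- s)) = monom_xy 0 0" for s :: 'a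
  proof (rule rep_inj)
    show "rep (s1_mult (transvection i j s) (transvection i j (- s))) = rep (monom_xy 0 0)"
      using assms
      by (auto simp: rep_mult rep_transvection matmult_transvection_left rep_one idmat_apply fun_eq_iff)
  qed auto
  show ?thesis
    unfolding Units_def using mem inv[of 1] inv[of "-1"] by auto
qed

lemma rep_commute_transvection:
  fixes z :: "nat \<times> nat \<Rightarrow> 'a::field"
  assumes z: "finite (supp2 z)"
    and comm: "s1_mult z (transvection i j 1) = s1_mult (transvection i j 1) z"
  shows "(if b = j then rep z (a, i) else 0) = (if a = i then rep z (j, b) else 0)"
proof -
  have "matmult (rep z) (rep (transvection i j 1)) (a, b) = matmult (rep (transvection i j 1)) (rep z) (a, b)"
    using comm by (simp add: rep_mult[symmetric] z)
  moreover have "matmult (rep z) (rep (transvection i j 1)) (a, b) = rep z (a, b) + (if b = j then 1 * rep z (a, i) else 0)"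
    unfolding rep_transvection using rep_row_support[OF z]
    by (intro matmult_transvection_right[of "{..a + (\<Sum>p\<in>supp2 z. snd p)}"]) auto
  moreover have "matmult (rep (transvection i j 1)) (rep z) (a, b) = rep z (a, b) + (if a = i then 1 * rep z (j, b) else 0)"
    unfolding rep_transvection by (rule matmult_transvection_left)
  ultimately have "rep z (a, b) + (if b = j then 1 * rep z (a, i) else 0)
      = rep z (a, b) + (if a = i then 1 * rep z (j, b) else 0)"
    by metis
  then show ?thesis
    by (simp only: add_left_cancel mult_1)
qed

lemma commutes_transvections_imp_scal:
  fixes z :: "nat \<times> nat \<Rightarrow> 'a::field"
  assumes z: "finite (supp2 z)"
    and comm: "\<And>i j. i \<noteq> j \<Longrightarrow> s1_mult z (transvection i j 1) = s1_mult (transvection i j 1) z"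
  shows "z = scal (rep z (0, 0))"
proof -
  note key = rep_commute_transvection[OF z comm]
  have off: "rep z (a, b) = 0" if "a \<noteq> b" for a b
  proof -
    have "(if Suc b = Suc b then rep z (a, b) else 0) = (if a = b then rep z (Suc b, Suc b) else 0)"
      by (rule key) simp
    with that show ?thesis
      by simp
  qed
  have diag: "rep z (b, b) = rep z (0, 0)" for b
  proof (cases "b = 0")
    case False
    have "(if 0 = (0::nat) then rep z (b, b) else 0) = (if b = b then rep z (0, 0) else 0)"
      by (rule key) (use False in simp)
    then show ?thesis
      by simp
  qed simp
  have "rep z = (\<lambda>q. rep z (0, 0) * idmat q)"
  proof (rule ext, clarify)
    fix a b
    show "rep z (a, b) = rep z (0, 0) * idmat (a, b)"
      using off[of a b] diag[of b] by (cases "a = b") (simp_all add: idmat_apply)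
  qed
  then have "rep z = rep (scal (rep z (0, 0)))"
    unfolding rep_scal .
  then show ?thesis
    by (rule rep_inj[OF z finite_supp2_scal])
qed

lemma scal_commute:
  "finite (supp2 x) \<Longrightarrow> s1_mult (scal c) x = s1_mult x (scal c)"
  by (simp add: s1_mult_scal_left s1_mult_scal_right)

lemma group_center_units_S1:
  "group_center (units_of (S1 :: (nat \<times> nat \<Rightarrow> 'a::field) monoid)) = Kstar_in_S1"
proof (intro equalityI subsetI)
  fix z :: "nat \<times> nat \<Rightarrow> 'a"
  assume "z \<in> group_center (units_of S1)"
  then have z: "z \<in> Units S1" and comm: "\<And>g. g \<in> Units S1 \<Longrightarrow> s1_mult z g = s1_mult g z"
    unfolding group_center_def units_of_def by auto
  then have fz: "finite (supp2 z)"
    by (auto simp: carrier_S1)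
  have zs: "z = scal (rep z (0, 0))"
    using commutes_transvections_imp_scal[OF fz] comm transvection_mem_Units_onePlusF Units_onePlusF_D(3)
    by blast
  have "rep z (0, 0) \<noteq> 0"
  proof
    assume "rep z (0, 0) = 0"
    with zs have "z = scal 0"
      by simp
    then have "z \<otimes>\<^bsub>S1\<^esub> inv\<^bsub>S1\<^esub> z = (\<lambda>p. 0)"
      using S1.Units_inv_closed[OF z] by (simp add: s1_mult_scal_left carrier_S1)
    then have "(monom_xy 0 0 :: _ \<Rightarrow> 'a) = (\<lambda>p. 0)"
      using S1.Units_r_inv[OF z] by simp
    then have "monom_xy 0 0 (0, 0) = (0::'a)"
      by simp
    then show False
      by (simp add: monom_xy_def)
  qed
  with zs show "z \<in> Kstar_in_S1"
    unfolding Kstar_in_S1_def by blast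
next
  fix z :: "nat \<times> nat \<Rightarrow> 'a"
  assume "z \<in> Kstar_in_S1"
  then obtain c where "c \<noteq> 0" "z = scal c"
    unfolding Kstar_in_S1_def by blast
  then show "z \<in> group_center (units_of S1)"
    by (auto simp: group_center_def units_of_def scal_in_Units_S1 scal_commute carrier_S1)
qed

lemma group_center_units_onePlusF:
  "group_center (units_of (onePlusF :: (nat \<times> nat \<Rightarrow> 'a::field) monoid)) = {\<one>\<^bsub>onePlusF\<^esub>}"
proof (intro equalityI subsetI)
  fix z :: "nat \<times> nat \<Rightarrow> 'a"
  assume "z \<in> group_center (units_of onePlusF)"
  then have z: "z \<in> Units onePlusF"
    and comm: "\<And>g. g \<in> Units onePlusF \<Longrightarrow> s1_mult z g = s1_mult g z"
    unfolding group_center_def units_of_def by auto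
  have zs: "z = scal (rep z (0, 0))"
    using commutes_transvections_imp_scal[OF Units_onePlusF_D(2)[OF z]] comm transvection_mem_Units_onePlusF
    by blast
  have "1 = symbol z 0"
    by (simp add: symbol_onePlusF Units_onePlusF_D(1)[OF z])
  also have "\<dots> = rep z (0, 0)"
    using arg_cong[OF zs, of "\<lambda>f. symbol f 0"] by (simp add: symbol_scal)
  finally show "z \<in> {\<one>\<^bsub>onePlusF\<^esub>}"
    using zs by (simp add: monom_xy_0_0)
next
  fix z
  assume "z \<in> {\<one>\<^bsub>(onePlusF :: (nat \<times> nat \<Rightarrow> 'a) monoid)\<^esub>}"
  then show "z \<in> group_center (units_of (onePlusF :: (nat \<times> nat \<Rightarrow> 'a) monoid))"
    using onePlusF.Units_one_closed by (auto simp: group_center_def units_of_def Units_onePlusF_D(2))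
qed

section \<open>Inner automorphisms\<close>

lemma (in monoid) Units_inv_mult:
  assumes "u \<in> Units G" "v \<in> Units G"
  shows "inv (u \<otimes> v) = inv v \<otimes> inv u"
proof -
  have "inv\<^bsub>units_of G\<^esub> (u \<otimes> v) = inv\<^bsub>units_of G\<^esub> v \<otimes> inv\<^bsub>units_of G\<^esub> u"
    using group.inv_mult_group[OF units_group, of u v] assms by (simp add: units_of_carrier units_of_mult)
  then show ?thesis
    using assms by (simp add: units_of_inv)
qed

lemma (in monoid) conj_mult:
  assumes "u \<in> Units G" "v \<in> Units G" "a \<in> carrier G"
  shows "u \<otimes> v \<otimes> a \<otimes> inv (u \<otimes> v) = u \<otimes> (v \<otimes> a \<otimes> inv v) \<otimes> inv u"
proof -
  have "u \<in> carrier G" "v \<in> carrier G" "inv u \<in> carrier G" "inv v \<in> carrier G"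
    using assms by auto
  with assms show ?thesis
    by (simp add: Units_inv_mult m_assoc)
qed

lemma (in monoid) conj_central_mult:
  assumes s: "s \<in> Units G" and central: "\<And>x. x \<in> carrier G \<Longrightarrow> s \<otimes> x = x \<otimes> s"
    and "w \<in> Units G" "a \<in> carrier G"
  shows "s \<otimes> w \<otimes> a \<otimes> inv (s \<otimes> w) = w \<otimes> a \<otimes> inv w"
proof -
  have "s \<otimes> w \<otimes> a \<otimes> inv (s \<otimes> w) = s \<otimes> (w \<otimes> a \<otimes> inv w) \<otimes> inv s"
    using assms(1,3,4) by (rule conj_mult)
  also have "\<dots> = w \<otimes> a \<otimes> inv w"
    using assms by (simp add: central m_assoc Units_closed)
  finally show ?thesis .
qed

lemma (in monoid) conj_eq_imp_commute:
  assumes u: "u \<in> Units G" and v: "v \<in> Units G" and a: "a \<in> carrier G"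
    and eq: "u \<otimes> a \<otimes> inv u = v \<otimes> a \<otimes> inv v"
  shows "inv v \<otimes> u \<otimes> a = a \<otimes> (inv v \<otimes> u)"
proof -
  have uv: "u \<in> carrier G" "v \<in> carrier G" "inv u \<in> carrier G" "inv v \<in> carrier G"
    using u v by auto
  have "inv v \<otimes> u \<otimes> a = inv v \<otimes> (u \<otimes> a \<otimes> inv u) \<otimes> u"
    using u a uv by (simp add: m_assoc)
  also have "\<dots> = inv v \<otimes> (v \<otimes> a \<otimes> inv v) \<otimes> u"
    by (simp only: eq)
  also have "\<dots> = a \<otimes> (inv v \<otimes> u)"
    using v a uv by (simp add: m_assoc flip: m_assoc[of "inv v" v])
  finally show ?thesis .
qed

lemma omega_mult:
  assumes "u \<in> Units S1" "v \<in> Units S1"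
  shows "omega (s1_mult u v) = (\<lambda>a\<in>carrier S1. omega u (omega v a))"
proof
  fix a
  show "omega (s1_mult u v) a = (\<lambda>a\<in>carrier S1. omega u (omega v a)) a"
  proof (cases "a \<in> carrier S1")
    case True
    have "v \<otimes>\<^bsub>S1\<^esub> a \<otimes>\<^bsub>S1\<^esub> inv\<^bsub>S1\<^esub> v \<in> carrier S1"
      using S1.m_closed[OF S1.m_closed[OF S1.Units_closed[OF assms(2)] True] S1.Units_inv_closed[OF assms(2)]] .
    with True show ?thesis
      using S1.conj_mult[OF assms True] by (simp add: omega_def)
  qed (simp add: omega_def)
qed

lemma omega_Units_S1_eq:
  "omega ` Units (onePlusF :: (nat \<times> nat \<Rightarrow> 'a::field_char_0) monoid) = omega ` Units S1"
proof (intro equalityI image_subsetI)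
  fix w :: "nat \<times> nat \<Rightarrow> 'a"
  assume "w \<in> Units onePlusF"
  then show "omega w \<in> omega ` Units S1"
    using Units_onePlusF_D(3) by blast
next
  fix u :: "nat \<times> nat \<Rightarrow> 'a"
  assume "u \<in> Units S1"
  then obtain c w where c: "c \<noteq> 0" and w: "w \<in> Units onePlusF" and u: "u = (\<lambda>p. c * w p)"
    by (rule Units_S1_decomp)
  have "omega (scal c \<otimes>\<^bsub>S1\<^esub> w) = omega w"
    using S1.conj_central_mult[OF scal_in_Units_S1[OF c] _ Units_onePlusF_D(3)[OF w]]
    by (auto simp: omega_def carrier_S1 scal_commute)
  then show "omega u \<in> omega ` Units onePlusF"
    using w by (simp add: u s1_mult_scal_left Units_onePlusF_D(2))
qed

lemma omega_inj_on: "inj_on omega (Units (onePlusF :: (nat \<times> nat \<Rightarrow> 'a::field) monoid))"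
proof (rule inj_onI)
  fix u v :: "nat \<times> nat \<Rightarrow> 'a"
  assume u: "u \<in> Units onePlusF" and v: "v \<in> Units onePlusF" and eq: "omega u = omega v"
  note uS = Units_onePlusF_D(3)[OF u] and vS = Units_onePlusF_D(3)[OF v]
  define z where "z = inv\<^bsub>S1\<^esub> v \<otimes>\<^bsub>S1\<^esub> u"
  have z: "z \<in> carrier S1"
    unfolding z_def by (intro S1.m_closed S1.Units_inv_closed S1.Units_closed uS vS)
  have "z \<otimes>\<^bsub>S1\<^esub> a = a \<otimes>\<^bsub>S1\<^esub> z" if "a \<in> carrier S1" for a
    unfolding z_def using uS vS that
    by (rule S1.conj_eq_imp_commute) (use fun_cong[OF eq, of a] that in \<open>simp add: omega_def\<close>)
  then have zs: "z = scal (rep z (0, 0))"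
    using z by (intro commutes_transvections_imp_scal) (auto simp: carrier_S1)
  have "u = v \<otimes>\<^bsub>S1\<^esub> z"
    using S1.m_assoc[OF S1.Units_closed[OF vS] S1.Units_inv_closed[OF vS] S1.Units_closed[OF uS]]
      S1.Units_r_inv[OF vS] S1.l_one[OF S1.Units_closed[OF uS]]
    by (simp add: z_def)
  also have "\<dots> = (\<lambda>p. rep z (0, 0) * v p)"
    by (subst zs) (simp add: s1_mult_scal_right Units_onePlusF_D(2)[OF v])
  finally have uv: "u = (\<lambda>p. rep z (0, 0) * v p)" .
  have "1 = symbol u 0"
    by (simp add: symbol_onePlusF Units_onePlusF_D(1)[OF u])
  also have "\<dots> = rep z (0, 0) * symbol v 0"
    by (subst uv) (rule symbol_smult[OF Units_onePlusF_D(2)[OF v]])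
  also have "\<dots> = rep z (0, 0)"
    by (simp add: symbol_onePlusF Units_onePlusF_D(1)[OF v])
  finally show "u = v"
    using uv by simp
qed

lemma omega_iso: "omega \<in> iso (units_of (onePlusF :: (nat \<times> nat \<Rightarrow> 'a::field_char_0) monoid)) Inn_S1"
proof (rule isoI)
  show "omega \<in> hom (units_of (onePlusF :: (nat \<times> nat \<Rightarrow> 'a) monoid)) Inn_S1"
    by (rule homI) (auto simp: Inn_S1_def units_of_def Units_onePlusF_D(3) omega_mult)
  show "bij_betw omega (carrier (units_of (onePlusF :: (nat \<times> nat \<Rightarrow> 'a) monoid))) (carrier Inn_S1)"
    using omega_inj_on omega_Units_S1_eq by (simp add: bij_betw_def units_of_def Inn_S1_def)
qed

theorem theorem4p5:
  shows "Units (S1 :: (nat \<times> nat \<Rightarrow> 'a::field_char_0) monoid)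
           = Kstar_in_S1 <#>\<^bsub>S1\<^esub> Units (onePlusF :: (nat \<times> nat \<Rightarrow> 'a) monoid)
       \<and> units_of (S1 :: (nat \<times> nat \<Rightarrow> 'a) monoid)
           \<cong> (Kmult :: 'a monoid) \<times>\<times> (GL_inf :: (nat \<times> nat \<Rightarrow> 'a) monoid)
       \<and> group_center (units_of (S1 :: (nat \<times> nat \<Rightarrow> 'a) monoid)) = Kstar_in_S1
       \<and> group_center (units_of (onePlusF :: (nat \<times> nat \<Rightarrow> 'a) monoid)) = {\<one>\<^bsub>onePlusF\<^esub>}
       \<and> omega \<in> iso (units_of (onePlusF :: (nat \<times> nat \<Rightarrow> 'a) monoid))
                      (Inn_S1 :: ((nat \<times> nat \<Rightarrow> 'a) \<Rightarrow> (nat \<times> nat \<Rightarrow> 'a)) monoid)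
       \<and> (Inn_S1 :: ((nat \<times> nat \<Rightarrow> 'a) \<Rightarrow> (nat \<times> nat \<Rightarrow> 'a)) monoid)
           \<cong> (GL_inf :: (nat \<times> nat \<Rightarrow> 'a) monoid)"
proof -
  have "(Inn_S1 :: ((nat \<times> nat \<Rightarrow> 'a) \<Rightarrow> (nat \<times> nat \<Rightarrow> 'a)) monoid)
      \<cong> units_of (onePlusF :: (nat \<times> nat \<Rightarrow> 'a) monoid)"
    by (rule group.iso_sym[OF group_units_onePlusF is_isoI[OF omega_iso]])
  also have "\<dots> \<cong> (GL_inf :: (nat \<times> nat \<Rightarrow> 'a) monoid)"
    by (rule is_isoI[OF rep_iso])
  finally show ?thesis
    by (simp add: Units_S1_eq_set_mult units_S1_iso_Kmult_GL_inf group_center_units_S1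
        group_center_units_onePlusF omega_iso)
qed

end
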